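(* Let $\varphi$ be any forecasting system and $\omega\in\Omega$. Then $\omega$ is Schnorr random for $\varphi$ if and only if there is no recursive, positive, rational-valued test supermartingale $R$ for $\varphi$ and growth function $\rho$ with $\limsup_{n\to\infty}[R(\omega^n)-\rho(n)]>0$.
   Context: Notation: $\mathbb N_0=\{0,1,\dots\}$; $\Omega=\{0,1\}^{\mathbb N}$; $\mathbb S$ finite binary strings, $\square$ empty string, $\omega^n$ first $n$ entries of $\omega$. $\mathcal I$: nonempty closed subintervals of $[0,1]$; $\overline E_I(f)=\max_{p\in I}[pf(1)+(1-p)f(0)]$. Forecasting system: any $\varphi:\mathbb S\to\mathcal I$. Supermartingale for $\varphi$: $M:\mathbb S\to\mathbb R$ with $\overline E_{\varphi(s)}(M(s\,\cdot))\le M(s)$ for all $s$ ($M(s\,\cdot):x\mapsto M(sx)$); test supermartingale: non-negative with $M(\square)=1$. A real map $r:\mathbb S\to\mathbb R$ is computable if there is a recursive $q:\mathbb S\times\mathbb N_0\to\mathbb Q$ with $|r(s)-q(s,N)|\le2^{-N}$; a rational-valued process is recursive if it is a recursive map $\mathbb S\to\mathbb Q$. A growth function is a recursive, non-decreasing, unbounded $\rho:\mathbb N_0\to\mathbb N_0$. $\omega$ is Schnorr random for $\varphi$ if $\limsup_n[T(\omega^n)-\rho(n)]\le0$ for all computable test supermartingales $T$ for $\varphi$ and all growth functions $\rho$. *)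

theory Defs
  imports Complex_Main "HOL-Library.Extended_Real" "HOL-Library.Liminf_Limsup"
    "HOL-Library.Nat_Bijection"
begin

primrec prec :: "(nat list \<Rightarrow> nat) \<Rightarrow> (nat list \<Rightarrow> nat) \<Rightarrow> nat \<Rightarrow> nat list \<Rightarrow> nat" where
  "prec f g 0 xs = f xs"
| "prec f g (Suc k) xs = g (k # prec f g k xs # xs)"

definition prec_fn :: "(nat list \<Rightarrow> nat) \<Rightarrow> (nat list \<Rightarrow> nat) \<Rightarrow> nat list \<Rightarrow> nat" where
  "prec_fn f g xs = (case xs of [] \<Rightarrow> 0 | x # ys \<Rightarrow> prec f g x ys)"

inductive recfn :: "nat \<Rightarrow> (nat list \<Rightarrow> nat) \<Rightarrow> bool" where
  zero: "recfn n (\<lambda>_. 0)"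
| succ: "recfn 1 (\<lambda>xs. Suc (hd xs))"
| proj: "i < n \<Longrightarrow> recfn n (\<lambda>xs. xs ! i)"
| comp: "recfn m f \<Longrightarrow> length gs = m \<Longrightarrow> (\<forall>g\<in>set gs. recfn n g)
          \<Longrightarrow> recfn n (\<lambda>xs. f (map (\<lambda>g. g xs) gs))"
| prim_rec: "recfn n f \<Longrightarrow> recfn (Suc (Suc n)) g \<Longrightarrow> recfn (Suc n) (prec_fn f g)"
| minim: "recfn (Suc n) f \<Longrightarrow> (\<forall>xs. length xs = n \<longrightarrow> (\<exists>y. f (y # xs) = 0))
          \<Longrightarrow> recfn n (\<lambda>xs. LEAST y. f (y # xs) = 0)"

text \<open>Binary strings are bool lists; True = 1, False = 0. The string s followed by x is s @ [x].\<close>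
type_synonym bstr = "bool list"

primrec str_code :: "bstr \<Rightarrow> nat" where
  "str_code [] = 0"
| "str_code (b # s) = 2 * str_code s + (if b then 2 else 1)"

definition rat_decode :: "nat \<Rightarrow> rat" where
  "rat_decode n = (case prod_decode n of (a, b) \<Rightarrow> of_int (int_decode a) / of_nat (Suc b))"

definition recursive_nat_fun :: "(nat \<Rightarrow> nat) \<Rightarrow> bool" where
  "recursive_nat_fun \<rho> \<longleftrightarrow> (\<exists>g. recfn 1 g \<and> (\<forall>n. \<rho> n = g [n]))"

definition recursive_rat_process :: "(bstr \<Rightarrow> rat) \<Rightarrow> bool" where
  "recursive_rat_process q \<longleftrightarrow> (\<exists>g. recfn 1 g \<and> (\<forall>s. q s = rat_decode (g [str_code s])))"

definition recursive_rat_map2 :: "(bstr \<Rightarrow> nat \<Rightarrow> rat) \<Rightarrow> bool" where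
  "recursive_rat_map2 q \<longleftrightarrow>
     (\<exists>g. recfn 2 g \<and> (\<forall>s N. q s N = rat_decode (g [str_code s, N])))"

definition computable_real_map :: "(bstr \<Rightarrow> real) \<Rightarrow> bool" where
  "computable_real_map r \<longleftrightarrow>
     (\<exists>q. recursive_rat_map2 q \<and> (\<forall>s N. \<bar>r s - real_of_rat (q s N)\<bar> \<le> (1/2) ^ N))"

definition is_forecast_interval :: "real set \<Rightarrow> bool" where
  "is_forecast_interval I \<longleftrightarrow> (\<exists>a b. 0 \<le> a \<and> a \<le> b \<and> b \<le> 1 \<and> I = {a..b})"

definition forecasting_system :: "(bstr \<Rightarrow> real set) \<Rightarrow> bool" where
  "forecasting_system \<phi> \<longleftrightarrow> (\<forall>s. is_forecast_interval (\<phi> s))"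

definition upper_exp :: "real set \<Rightarrow> (bool \<Rightarrow> real) \<Rightarrow> real" where
  "upper_exp I f = (SUP p\<in>I. p * f True + (1 - p) * f False)"

definition supermartingale :: "(bstr \<Rightarrow> real set) \<Rightarrow> (bstr \<Rightarrow> real) \<Rightarrow> bool" where
  "supermartingale \<phi> M \<longleftrightarrow> (\<forall>s. upper_exp (\<phi> s) (\<lambda>x. M (s @ [x])) \<le> M s)"

definition test_supermartingale :: "(bstr \<Rightarrow> real set) \<Rightarrow> (bstr \<Rightarrow> real) \<Rightarrow> bool" where
  "test_supermartingale \<phi> M \<longleftrightarrow> supermartingale \<phi> M \<and> (\<forall>s. 0 \<le> M s) \<and> M [] = 1"

definition growth_function :: "(nat \<Rightarrow> nat) \<Rightarrow> bool" where
  "growth_function \<rho> \<longleftrightarrow> recursive_nat_fun \<rho> \<and> mono \<rho> \<and> (\<forall>B. \<exists>n. B < \<rho> n)"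

text \<open>omega^n: the first n entries of omega (outcomes indexed from 0).\<close>
definition prefix :: "(nat \<Rightarrow> bool) \<Rightarrow> nat \<Rightarrow> bstr" where
  "prefix \<omega> n = map \<omega> [0..<n]"

definition schnorr_random :: "(bstr \<Rightarrow> real set) \<Rightarrow> (nat \<Rightarrow> bool) \<Rightarrow> bool" where
  "schnorr_random \<phi> \<omega> \<longleftrightarrow>
     (\<forall>T \<rho>. computable_real_map T \<and> test_supermartingale \<phi> T \<and> growth_function \<rho> \<longrightarrow>
        limsup (\<lambda>n. ereal (T (prefix \<omega> n) - real (\<rho> n))) \<le> 0)"

end

theory Submission
  imports Defs
begin

text \<open>A recursive rational process is in particular a computable real map, so Schnorr randomness
  excludes the rational tests. Conversely, let \<open>T\<close> be a computable test supermartingale with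
  rational approximations \<open>q s N\<close> to within \<open>1/2^N\<close>. Put \<open>e s = 1/2^(code s + 2)\<close> and
  \<open>U s = q s (code s + 2) + 3 e s\<close>, so that \<open>T s + 2 e s \<le> U s \<le> T s + 4 e s\<close>. Since the code
  of a string grows when it is extended, \<open>4 e (s x) \<le> 2 e s\<close>: the surplus of \<open>U\<close> over \<open>T\<close> at the
  children is covered by the surplus at the parent, so \<open>U\<close> is a positive recursive rational
  supermartingale, and \<open>R = U / U []\<close> is a test supermartingale with \<open>R \<ge> T / 2\<close> because
  \<open>U [] \<le> 2\<close>. Halving the growth function then carries a positive \<open>limsup\<close> of \<open>T - \<rho>\<close>
  over to \<open>R - \<rho> div 2\<close>.\<close>

section \<open>Closure properties of total recursive functions\<close>

lemma recfn_comp1: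
  assumes "recfn 1 h" and "recfn n f"
  shows "recfn n (\<lambda>xs. h [f xs])"
  using recfn.comp[OF assms(1), of "[f]" n] assms(2) by simp

lemma recfn_comp2:
  assumes "recfn 2 h" and "recfn n f" and "recfn n g"
  shows "recfn n (\<lambda>xs. h [f xs, g xs])"
  using recfn.comp[OF assms(1), of "[f, g]" n] assms(2,3) by simp

lemma recfn_lift1:
  assumes "recfn 1 (\<lambda>xs. H (xs ! 0))" and "recfn n f"
  shows "recfn n (\<lambda>xs. H (f xs))"
  using recfn_comp1[OF assms] by simp

lemma recfn_lift2:
  assumes "recfn 2 (\<lambda>xs. H (xs ! 0) (xs ! 1))" and "recfn n f" and "recfn n g"
  shows "recfn n (\<lambda>xs. H (f xs) (g xs))"
  using recfn_comp2[OF assms] by simp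

lemma recfn_Suc: "recfn n f \<Longrightarrow> recfn n (\<lambda>xs. Suc (f xs))"
  using recfn_comp1[OF recfn.succ] by simp

lemma recfn_const: "recfn n (\<lambda>_. c)"
  by (induction c) (use recfn.zero recfn_Suc in fastforce)+

lemma recfn_prim_rec2:
  assumes B: "recfn 1 (\<lambda>xs. B (xs ! 0))" and S: "recfn 3 (\<lambda>xs. S (xs ! 0) (xs ! 1) (xs ! 2))"
    and F_0: "\<And>y. F 0 y = B y" and F_Suc: "\<And>k y. F (Suc k) y = S k (F k y) y"
  shows "recfn 2 (\<lambda>xs. F (xs ! 0) (xs ! 1))"
proof -
  let ?f = "\<lambda>xs::nat list. B (xs ! 0)" and ?g = "\<lambda>xs::nat list. S (xs ! 0) (xs ! 1) (xs ! 2)"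
  have "recfn 2 (prec_fn ?f ?g)"
    using recfn.prim_rec[OF B, of ?g] S by (simp add: numeral_eq_Suc)
  then have "recfn 2 (\<lambda>xs. prec_fn ?f ?g [xs ! 0, xs ! 1])"
    by (rule recfn_comp2) (auto intro: recfn.proj)
  moreover have "prec ?f ?g x [y] = F x y" for x y
    by (induction x) (simp_all add: F_0 F_Suc)
  ultimately show ?thesis
    by (simp add: prec_fn_def)
qed

lemma recfn_prim_rec1:
  assumes S: "recfn 2 (\<lambda>xs. S (xs ! 0) (xs ! 1))"
    and F_0: "F 0 = b" and F_Suc: "\<And>k. F (Suc k) = S k (F k)"
  shows "recfn 1 (\<lambda>xs. F (xs ! 0))"
proof -
  have "recfn 3 (\<lambda>xs. S (xs ! 0) (xs ! 1))"
    by (rule recfn_lift2[OF S]) (auto intro: recfn.proj)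
  then have "recfn 2 (\<lambda>xs. (\<lambda>x y. F x) (xs ! 0) (xs ! 1))"
    by (intro recfn_prim_rec2[where B = "\<lambda>_. b" and S = "\<lambda>k r y. S k r"])
      (auto intro: recfn_const simp: F_0 F_Suc)
  then have "recfn 1 (\<lambda>xs. (\<lambda>x y. F x) (xs ! 0) (xs ! 0))"
    by (rule recfn_lift2) (auto intro: recfn.proj)
  then show ?thesis by simp
qed

lemma recfn_Least:
  assumes H: "recfn 2 (\<lambda>xs. H (xs ! 0) (xs ! 1))" and ex: "\<And>x. \<exists>y. H y x = 0"
  shows "recfn 1 (\<lambda>xs. LEAST y. H y (xs ! 0) = 0)"
  using recfn.minim[of 1 "\<lambda>xs. H (xs ! 0) (xs ! 1)"] H ex by (simp add: numeral_eq_Suc)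

lemma recfn_add:
  assumes "recfn n f" and "recfn n g"
  shows "recfn n (\<lambda>xs. f xs + g xs)"
proof -
  have "recfn 2 (\<lambda>xs. xs ! 0 + xs ! 1)"
    by (rule recfn_prim_rec2[where B = "\<lambda>y. y" and S = "\<lambda>k r y. Suc r"])
      (auto intro!: recfn.proj recfn_Suc)
  from recfn_lift2[of "(+)", OF this assms] show ?thesis .
qed

lemma recfn_mult:
  assumes "recfn n f" and "recfn n g"
  shows "recfn n (\<lambda>xs. f xs * g xs)"
proof -
  have "recfn 2 (\<lambda>xs. xs ! 0 * xs ! 1)"
    by (rule recfn_prim_rec2[where B = "\<lambda>y. 0" and S = "\<lambda>k r y. r + y"])
      (auto intro!: recfn.proj recfn_add recfn_const)
  from recfn_lift2[of "(*)", OF this assms] show ?thesis .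
qed

lemma recfn_diff:
  assumes "recfn n f" and "recfn n g"
  shows "recfn n (\<lambda>xs. f xs - g xs)"
proof -
  have "recfn 1 (\<lambda>xs. xs ! 0 - 1)"
    by (rule recfn_prim_rec1[where S = "\<lambda>k r. k" and b = 0]) (auto intro: recfn.proj)
  then have "recfn 3 (\<lambda>xs. xs ! 1 - 1)"
    by (rule recfn_lift1) (auto intro: recfn.proj)
  then have "recfn 2 (\<lambda>xs. (\<lambda>x y. y - x) (xs ! 0) (xs ! 1))"
    by (intro recfn_prim_rec2[where B = "\<lambda>y. y" and S = "\<lambda>k r y. r - 1"]) (auto intro: recfn.proj)
  then show ?thesis
    using recfn_lift2[of "\<lambda>x y. y - x" n g f] assms by simp
qed

lemma recfn_power2: "recfn n f \<Longrightarrow> recfn n (\<lambda>xs. 2 ^ f xs)"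
  by (rule recfn_lift1, rule recfn_prim_rec1[where S = "\<lambda>k r. r + r" and b = 1])
    (auto intro!: recfn.proj recfn_add)

lemma recfn_triangle: "recfn n f \<Longrightarrow> recfn n (\<lambda>xs. triangle (f xs))"
  by (rule recfn_lift1, rule recfn_prim_rec1[where S = "\<lambda>k r. r + Suc k" and b = 0])
    (auto intro!: recfn.proj recfn_add recfn_Suc)

lemma recfn_mod2: "recfn n f \<Longrightarrow> recfn n (\<lambda>xs. f xs mod 2)"
  by (rule recfn_lift1, rule recfn_prim_rec1[where S = "\<lambda>k r. 1 - r" and b = 0])
    (auto intro!: recfn.proj recfn_diff recfn_const simp: mod_Suc)

lemma recfn_div2: "recfn n f \<Longrightarrow> recfn n (\<lambda>xs. f xs div 2)"
  by (rule recfn_lift1, rule recfn_prim_rec1[where S = "\<lambda>k r. r + k mod 2" and b = 0])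
    (auto intro!: recfn.proj recfn_add recfn_mod2 simp del: One_nat_def, presburger)

section \<open>Recursive coding of pairs and rationals\<close>

definition triangle_root :: "nat \<Rightarrow> nat" where
  "triangle_root n = (LEAST w. n < triangle (Suc w))"

lemma triangle_root_bounds:
  "triangle (triangle_root n) \<le> n" "n < triangle (Suc (triangle_root n))"
proof -
  have ex: "\<exists>w. n < triangle (Suc w)"
    by (rule exI[of _ n]) (induction n, auto)
  show "n < triangle (Suc (triangle_root n))"
    unfolding triangle_root_def by (rule LeastI_ex[OF ex])
  show "triangle (triangle_root n) \<le> n"
  proof (cases "triangle_root n")
    case (Suc v)
    then have "\<not> n < triangle (Suc v)"
      using not_less_Least[of v "\<lambda>w. n < triangle (Suc w)"] unfolding triangle_root_def by simp
    then show ?thesis using Suc by simp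
  qed simp
qed

lemma prod_decode_triangle_root:
  "prod_decode n = (n - triangle (triangle_root n), triangle_root n - (n - triangle (triangle_root n)))"
proof -
  let ?w = "triangle_root n"
  have "n - triangle ?w \<le> ?w"
    using triangle_root_bounds[of n] by simp
  then have "prod_encode (n - triangle ?w, ?w - (n - triangle ?w)) = n"
    using triangle_root_bounds(1)[of n] by (simp add: prod_encode_def)
  then show ?thesis
    by (metis prod_encode_inverse)
qed

lemma recfn_triangle_root:
  assumes "recfn n f"
  shows "recfn n (\<lambda>xs. triangle_root (f xs))"
proof -
  have "recfn 2 (\<lambda>xs. Suc (xs ! 1) - triangle (Suc (xs ! 0)))"
    by (intro recfn_diff recfn_Suc recfn_triangle recfn.proj) simp_all
  moreover have "\<exists>y. Suc x - triangle (Suc y) = 0" for x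
    by (metis triangle_root_bounds(2) Suc_leI diff_is_0_eq)
  ultimately have "recfn 1 (\<lambda>xs. LEAST y. Suc (xs ! 0) - triangle (Suc y) = 0)"
    using recfn_Least[of "\<lambda>y x. Suc x - triangle (Suc y)"] by simp
  then have "recfn 1 (\<lambda>xs. triangle_root (xs ! 0))"
    by (simp only: triangle_root_def diff_is_0_eq Suc_le_eq)
  from recfn_lift1[of triangle_root, OF this assms] show ?thesis .
qed

lemma recfn_prod_decode:
  assumes "recfn n f"
  shows "recfn n (\<lambda>xs. fst (prod_decode (f xs)))" and "recfn n (\<lambda>xs. snd (prod_decode (f xs)))"
  unfolding prod_decode_triangle_root
  by (auto intro!: recfn_diff recfn_triangle recfn_triangle_root assms)

lemma recfn_prod_encode:
  assumes "recfn n f" and "recfn n g"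
  shows "recfn n (\<lambda>xs. prod_encode (f xs, g xs))"
  unfolding prod_encode_def by (simp add: recfn_add recfn_triangle assms)

lemma int_decode_double: "int_decode (2 * k) = int k"
  by (simp add: int_decode_def sum_decode_def)

text \<open>In the odd case truncated subtraction yields 0 exactly when the value is negative, matching \<open>nat\<close>.\<close>
lemma nat_int_decode_affine:
  "nat (int_decode a * int P + int k) =
     (1 - a mod 2) * (a div 2 * P + k) + a mod 2 * (k - Suc (a div 2) * P)"
proof (cases "even a")
  case True
  then show ?thesis
    by (simp add: int_decode_def sum_decode_def nat_add_distrib nat_mult_distrib)
next
  case False
  then have "a mod 2 = 1" by presburger
  with False show ?thesis
    by (simp add: int_decode_def sum_decode_def algebra_simps nat_diff_distrib' flip: of_nat_mult)
qed

lemma recfn_nat_int_decode_affine: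
  assumes "recfn n f" and "recfn n g" and "recfn n h"
  shows "recfn n (\<lambda>xs. nat (int_decode (f xs) * int (g xs) + int (h xs)))"
  unfolding nat_int_decode_affine
  by (intro recfn_add recfn_mult recfn_diff recfn_mod2 recfn_div2 recfn_Suc recfn_const assms)

lemma recursive_rat_process_fraction:
  assumes "recfn 1 (\<lambda>xs. num (xs ! 0))" and "recfn 1 (\<lambda>xs. den (xs ! 0))" and "\<And>m. 0 < den m"
  shows "recursive_rat_process (\<lambda>s. of_nat (num (str_code s)) / of_nat (den (str_code s)))"
proof -
  let ?code = "\<lambda>m. prod_encode (2 * num m, den m - 1)"
  have "recfn 1 (\<lambda>xs. ?code (xs ! 0))"
    by (intro recfn_prod_encode recfn_mult recfn_diff recfn_const assms(1,2))
  moreover have "of_nat (num m) / of_nat (den m) = rat_decode (?code m)" for m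
    using assms(3)[of m] by (simp add: rat_decode_def int_decode_double)
  ultimately show ?thesis
    unfolding recursive_rat_process_def by (intro exI[of _ "\<lambda>xs. ?code (xs ! 0)"]) simp
qed

lemma positive_rat_as_fraction:
  fixes c :: rat
  assumes "0 < c"
  obtains n d :: nat where "0 < n" and "0 < d" and "c = of_nat n / of_nat d"
proof -
  obtain p q where pq: "quotient_of c = (p, q)" by fastforce
  have c: "c = of_int p / of_int q" and q: "0 < q"
    using quotient_of_div[OF pq] quotient_of_denom_pos[OF pq] by auto
  with assms have "0 < p" by (simp add: zero_less_divide_iff)
  with c q show ?thesis
    by (intro that[of "nat p" "nat q"]) auto
qed

lemma recursive_rat_process_dyadic_shift_divide:
  fixes q :: "bstr \<Rightarrow> nat \<Rightarrow> rat" and c :: rat and j k :: nat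
  defines "U \<equiv> \<lambda>s. q s (str_code s + k) + of_nat j / 2 ^ (str_code s + k)"
  assumes q: "recursive_rat_map2 q" and c: "0 < c" and U_pos: "\<And>s. 0 < U s"
  shows "recursive_rat_process (\<lambda>s. U s / c)"
proof -
  obtain g where g: "recfn 2 g" and q_g: "\<And>s N. q s N = rat_decode (g [str_code s, N])"
    using q unfolding recursive_rat_map2_def by blast
  obtain cn cd where cn: "0 < cn" and cd: "0 < cd" and c_eq: "c = of_nat cn / of_nat cd"
    using positive_rat_as_fraction[OF c] .
  define a where "a m = fst (prod_decode (g [m, m + k]))" for m
  define b where "b m = snd (prod_decode (g [m, m + k]))" for m
  define X where "X m = int_decode (a m) * int (2 ^ (m + k)) + int (j * Suc (b m))" for m
  define num where "num m = nat (X m) * cd" for m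
  define den where "den m = Suc (b m) * 2 ^ (m + k) * cn" for m
  have U_X: "U s / c = of_int (X (str_code s)) * of_nat cd / of_nat (den (str_code s))" for s
    using cn cd unfolding U_def q_g c_eq X_def den_def rat_decode_def a_def b_def
    by (simp add: case_prod_beta field_simps)
  have den_pos: "0 < den m" for m
    using cn by (simp add: den_def)
  have X_pos: "0 < X (str_code s)" for s
  proof -
    have "0 < U s / c"
      using U_pos c by (rule divide_pos_pos)
    then have "0 < of_int (X (str_code s)) * of_nat cd / (of_nat (den (str_code s)) :: rat)"
      by (simp only: U_X)
    then show ?thesis
      using cd den_pos[of "str_code s"] by (simp add: zero_less_divide_iff zero_less_mult_iff)
  qed
  have "U s / c = of_nat (num (str_code s)) / of_nat (den (str_code s))" for s
    using X_pos[of s] unfolding U_X num_def by simp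
  moreover have "recfn 1 (\<lambda>xs. num (xs ! 0))"
    unfolding num_def X_def a_def b_def
    by (intro recfn_mult recfn_nat_int_decode_affine recfn_prod_decode recfn_comp2[OF g]
        recfn_power2 recfn_add recfn_Suc recfn_const recfn.proj) simp_all
  moreover have "recfn 1 (\<lambda>xs. den (xs ! 0))"
    unfolding den_def b_def
    by (intro recfn_mult recfn_prod_decode recfn_comp2[OF g] recfn_power2 recfn_add recfn_Suc
        recfn_const recfn.proj) simp_all
  ultimately show ?thesis
    using recursive_rat_process_fraction[of num den] den_pos by simp
qed

section \<open>Supermartingales for forecasting systems\<close>

lemma upper_exp_le_iff:
  assumes "is_forecast_interval I"
  shows "upper_exp I f \<le> M \<longleftrightarrow> (\<forall>p\<in>I. p * f True + (1 - p) * f False \<le> M)"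
proof -
  obtain a b where "0 \<le> a" "a \<le> b" "b \<le> 1" and I: "I = {a..b}"
    using assms unfolding is_forecast_interval_def by blast
  then have "I \<noteq> {}" by simp
  moreover have "bdd_above ((\<lambda>p. p * f True + (1 - p) * f False) ` I)"
  proof (rule bdd_aboveI2)
    fix p assume "p \<in> I"
    with \<open>0 \<le> a\<close> \<open>b \<le> 1\<close> show "p * f True + (1 - p) * f False \<le> max (f True) (f False)"
      unfolding I by (intro convex_bound_le) auto
  qed
  ultimately show ?thesis
    unfolding upper_exp_def by (rule cSUP_le_iff)
qed

lemma supermartingale_iff:
  assumes "forecasting_system \<phi>"
  shows "supermartingale \<phi> M \<longleftrightarrow>
    (\<forall>s. \<forall>p\<in>\<phi> s. p * M (s @ [True]) + (1 - p) * M (s @ [False]) \<le> M s)"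
  using assms unfolding supermartingale_def forecasting_system_def by (simp add: upper_exp_le_iff)

lemma forecasting_system_probability:
  assumes "forecasting_system \<phi>" and "p \<in> \<phi> s"
  shows "0 \<le> p" and "p \<le> 1"
  using assms unfolding forecasting_system_def is_forecast_interval_def by force+

lemma supermartingale_divide:
  assumes \<phi>: "forecasting_system \<phi>" and M: "supermartingale \<phi> M" and c: "0 < c"
  shows "supermartingale \<phi> (\<lambda>s. M s / c)"
  unfolding supermartingale_iff[OF \<phi>]
proof (intro allI ballI)
  fix s p
  assume "p \<in> \<phi> s"
  with M have "p * M (s @ [True]) + (1 - p) * M (s @ [False]) \<le> M s"
    unfolding supermartingale_iff[OF \<phi>] by blast
  then have "(p * M (s @ [True]) + (1 - p) * M (s @ [False])) / c \<le> M s / c"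
    using c by (intro divide_right_mono) simp_all
  then show "p * (M (s @ [True]) / c) + (1 - p) * (M (s @ [False]) / c) \<le> M s / c"
    by (simp add: add_divide_distrib)
qed

lemma supermartingale_of_slack:
  assumes \<phi>: "forecasting_system \<phi>" and T: "supermartingale \<phi> T"
    and lower: "\<And>s. T s + \<delta> s \<le> V s" and upper: "\<And>s x. V (s @ [x]) \<le> T (s @ [x]) + \<delta> s"
  shows "supermartingale \<phi> V"
  unfolding supermartingale_iff[OF \<phi>]
proof (intro allI ballI)
  fix s p
  assume p: "p \<in> \<phi> s"
  note p_bounds = forecasting_system_probability[OF \<phi> p]
  have "p * V (s @ [True]) + (1 - p) * V (s @ [False])
      \<le> p * (T (s @ [True]) + \<delta> s) + (1 - p) * (T (s @ [False]) + \<delta> s)"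
    using p_bounds by (intro add_mono mult_left_mono upper) simp_all
  also have "\<dots> = p * T (s @ [True]) + (1 - p) * T (s @ [False]) + \<delta> s"
    by (simp add: algebra_simps)
  also have "\<dots> \<le> T s + \<delta> s"
    using T p unfolding supermartingale_iff[OF \<phi>] by simp
  also have "\<dots> \<le> V s"
    by (rule lower)
  finally show "p * V (s @ [True]) + (1 - p) * V (s @ [False]) \<le> V s" .
qed

section \<open>Rational test supermartingales dominating computable ones\<close>

lemma str_code_snoc: "str_code s < str_code (s @ [x])"
  by (induction s) auto

definition dyadic_overestimate :: "(bstr \<Rightarrow> nat \<Rightarrow> rat) \<Rightarrow> bstr \<Rightarrow> rat" where
  "dyadic_overestimate q s = q s (str_code s + 2) + 3 / 2 ^ (str_code s + 2)"

lemma dyadic_overestimate_bounds: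
  assumes "\<And>N. \<bar>T s - real_of_rat (q s N)\<bar> \<le> (1/2) ^ N"
  shows "T s + 2 * (1/2) ^ (str_code s + 2) \<le> real_of_rat (dyadic_overestimate q s)"
    and "real_of_rat (dyadic_overestimate q s) \<le> T s + 4 * (1/2) ^ (str_code s + 2)"
proof -
  have "real_of_rat (dyadic_overestimate q s)
      = real_of_rat (q s (str_code s + 2)) + 3 * (1/2) ^ (str_code s + 2)"
    by (simp add: dyadic_overestimate_def of_rat_add of_rat_divide of_rat_mult of_rat_power power_one_over)
  with assms[of "str_code s + 2"]
  show "T s + 2 * (1/2) ^ (str_code s + 2) \<le> real_of_rat (dyadic_overestimate q s)"
    and "real_of_rat (dyadic_overestimate q s) \<le> T s + 4 * (1/2) ^ (str_code s + 2)"
    by linarith+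
qed

lemma supermartingale_dyadic_overestimate:
  assumes \<phi>: "forecasting_system \<phi>" and T: "supermartingale \<phi> T"
    and approx: "\<And>s N. \<bar>T s - real_of_rat (q s N)\<bar> \<le> (1/2) ^ N"
  shows "supermartingale \<phi> (\<lambda>s. real_of_rat (dyadic_overestimate q s))"
proof (rule supermartingale_of_slack[OF \<phi> T])
  show "T s + 2 * (1/2) ^ (str_code s + 2) \<le> real_of_rat (dyadic_overestimate q s)" for s
    by (rule dyadic_overestimate_bounds(1)[where T = T and q = q and s = s, OF approx])
  show "real_of_rat (dyadic_overestimate q (s @ [x])) \<le> T (s @ [x]) + 2 * (1/2) ^ (str_code s + 2)"
    for s x
  proof -
    have "(1/2::real) ^ (str_code (s @ [x]) + 2) \<le> (1/2) ^ Suc (str_code s + 2)"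
      using str_code_snoc[of s x] by (intro power_decreasing) auto
    then have "2 * (1/2::real) ^ (str_code (s @ [x]) + 2) \<le> (1/2) ^ (str_code s + 2)"
      by simp
    with dyadic_overestimate_bounds(2)[where T = T and q = q and s = "s @ [x]", OF approx] show ?thesis
      by linarith
  qed
qed

lemma computable_test_supermartingale_rational_half:
  assumes \<phi>: "forecasting_system \<phi>" and T_comp: "computable_real_map T"
    and T: "test_supermartingale \<phi> T"
  obtains R where "recursive_rat_process R" and "\<And>s. 0 < R s"
    and "test_supermartingale \<phi> (\<lambda>s. real_of_rat (R s))" and "\<And>s. T s / 2 \<le> real_of_rat (R s)"
proof -
  obtain q where q: "recursive_rat_map2 q"
    and approx: "\<And>s N. \<bar>T s - real_of_rat (q s N)\<bar> \<le> (1/2) ^ N"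
    using T_comp unfolding computable_real_map_def by blast
  have T_nonneg: "\<And>s. 0 \<le> T s" and T_root: "T [] = 1" and T_super: "supermartingale \<phi> T"
    using T unfolding test_supermartingale_def by auto
  define U where "U = dyadic_overestimate q"
  have T_le_U: "T s \<le> real_of_rat (U s)" and U_pos: "0 < U s" for s
  proof -
    have "0 < (1/2::real) ^ (str_code s + 2)"
      by simp
    with dyadic_overestimate_bounds(1)[where T = T and q = q and s = s, OF approx] T_nonneg[of s]
    have "T s \<le> real_of_rat (U s)" and "0 < real_of_rat (U s)"
      unfolding U_def by linarith+
    then show "T s \<le> real_of_rat (U s)" and "0 < U s"
      by simp_all
  qed
  define c where "c = U []"
  have c_pos: "0 < real_of_rat c"
    using U_pos by (simp add: c_def)
  have c_le_2: "real_of_rat c \<le> 2"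
    using dyadic_overestimate_bounds(2)[where T = T and q = q and s = "[]", OF approx] by (simp add: c_def U_def T_root)
  define R where "R s = U s / c" for s
  have R_real: "real_of_rat (R s) = real_of_rat (U s) / real_of_rat c" for s
    by (simp add: R_def of_rat_divide)
  have R_pos: "0 < R s" for s
    using U_pos c_pos by (simp add: R_def)
  show ?thesis
  proof
    show "recursive_rat_process R"
      using recursive_rat_process_dyadic_shift_divide[OF q, of c 2 3] U_pos c_pos
      unfolding R_def U_def dyadic_overestimate_def by simp
    show "0 < R s" for s
      by (rule R_pos)
    show "test_supermartingale \<phi> (\<lambda>s. real_of_rat (R s))"
      unfolding test_supermartingale_def
    proof (intro conjI allI)
      show "supermartingale \<phi> (\<lambda>s. real_of_rat (R s))"
        using supermartingale_divide[OF \<phi> supermartingale_dyadic_overestimate[OF \<phi> T_super approx] c_pos]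
        by (simp add: R_real U_def)
      show "0 \<le> real_of_rat (R s)" for s
        using R_pos[of s] by simp
      show "real_of_rat (R []) = 1"
        using U_pos[of "[]"] by (simp add: R_def c_def)
    qed
    show "T s / 2 \<le> real_of_rat (R s)" for s
    proof -
      have "T s / 2 \<le> T s / real_of_rat c"
        using T_nonneg[of s] c_pos c_le_2 by (intro divide_left_mono) auto
      also have "\<dots> \<le> real_of_rat (U s) / real_of_rat c"
        using T_le_U[of s] c_pos by (intro divide_right_mono) simp_all
      finally show ?thesis
        unfolding R_real .
    qed
  qed
qed

lemma computable_real_map_of_rat_process:
  assumes "recursive_rat_process R"
  shows "computable_real_map (\<lambda>s. real_of_rat (R s))"
proof -
  obtain g where g: "recfn 1 g" and R_g: "\<And>s. R s = rat_decode (g [str_code s])"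
    using assms unfolding recursive_rat_process_def by blast
  have "recfn 2 (\<lambda>xs. g [xs ! 0])"
    by (intro recfn_comp1[OF g] recfn.proj) simp
  then have "recursive_rat_map2 (\<lambda>s N. R s)"
    unfolding recursive_rat_map2_def using R_g by auto
  then show ?thesis
    unfolding computable_real_map_def by (intro exI[of _ "\<lambda>s N. R s"]) auto
qed

lemma growth_function_div2:
  assumes "growth_function \<rho>"
  shows "growth_function (\<lambda>n. \<rho> n div 2)"
proof -
  obtain g where g: "recfn 1 g" and \<rho>_g: "\<And>n. \<rho> n = g [n]"
    using assms unfolding growth_function_def recursive_nat_fun_def by blast
  have "recfn 1 (\<lambda>xs. g [xs ! 0] div 2)"
    by (intro recfn_div2 recfn_comp1[OF g] recfn.proj) simp
  then have "recursive_nat_fun (\<lambda>n. \<rho> n div 2)"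
    unfolding recursive_nat_fun_def using \<rho>_g by auto
  moreover have "mono (\<lambda>n. \<rho> n div 2)"
    using assms unfolding growth_function_def by (auto intro!: monoI div_le_mono dest: monoD)
  moreover have "\<exists>n. B < \<rho> n div 2" for B
  proof -
    obtain n where "2 * B + 1 < \<rho> n"
      using assms unfolding growth_function_def by blast
    then show ?thesis by (intro exI[of _ n]) linarith
  qed
  ultimately show ?thesis
    unfolding growth_function_def by blast
qed

lemma limsup_pos_of_half_le:
  fixes x y :: "nat \<Rightarrow> real"
  assumes "\<And>n. x n / 2 \<le> y n" and "0 < limsup (\<lambda>n. ereal (x n))"
  shows "0 < limsup (\<lambda>n. ereal (y n))"
proof -
  have "0 < limsup (\<lambda>n. ereal (x n)) * ereal (1/2)"
    using assms(2) by (cases "limsup (\<lambda>n. ereal (x n))") auto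
  also have "\<dots> = limsup (\<lambda>n. ereal (x n) * ereal (1/2))"
    by (rule limsup_ereal_mult_right[symmetric]) simp
  also have "\<dots> \<le> limsup (\<lambda>n. ereal (y n))"
    by (rule Limsup_mono) (use assms(1) in simp)
  finally show ?thesis .
qed

theorem proposition4p4:
  fixes \<phi> :: "bool list \<Rightarrow> real set" and \<omega> :: "nat \<Rightarrow> bool"
  assumes "forecasting_system \<phi>"
  shows "schnorr_random \<phi> \<omega> \<longleftrightarrow>
    \<not> (\<exists>R \<rho>. recursive_rat_process R \<and> (\<forall>s. 0 < R s) \<and>
          test_supermartingale \<phi> (\<lambda>s. real_of_rat (R s)) \<and> growth_function \<rho> \<and>
          limsup (\<lambda>n. ereal (real_of_rat (R (prefix \<omega> n)) - real (\<rho> n))) > 0)"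
proof
  assume "schnorr_random \<phi> \<omega>"
  then show "\<not> (\<exists>R \<rho>. recursive_rat_process R \<and> (\<forall>s. 0 < R s) \<and>
          test_supermartingale \<phi> (\<lambda>s. real_of_rat (R s)) \<and> growth_function \<rho> \<and>
          limsup (\<lambda>n. ereal (real_of_rat (R (prefix \<omega> n)) - real (\<rho> n))) > 0)"
    unfolding schnorr_random_def using computable_real_map_of_rat_process by (meson not_le)
next
  assume no_rational_test: "\<not> (\<exists>R \<rho>. recursive_rat_process R \<and> (\<forall>s. 0 < R s) \<and>
          test_supermartingale \<phi> (\<lambda>s. real_of_rat (R s)) \<and> growth_function \<rho> \<and>
          limsup (\<lambda>n. ereal (real_of_rat (R (prefix \<omega> n)) - real (\<rho> n))) > 0)"
  show "schnorr_random \<phi> \<omega>"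
    unfolding schnorr_random_def
  proof (intro allI impI, elim conjE)
    fix T \<rho>
    assume T_comp: "computable_real_map T" and T: "test_supermartingale \<phi> T"
      and \<rho>: "growth_function \<rho>"
    obtain R where R: "recursive_rat_process R" "\<forall>s. 0 < R s" "test_supermartingale \<phi> (\<lambda>s. real_of_rat (R s))"
      and T_half: "\<And>s. T s / 2 \<le> real_of_rat (R s)"
      using computable_test_supermartingale_rational_half[OF assms T_comp T] by blast
    have half_le: "(T (prefix \<omega> n) - real (\<rho> n)) / 2
        \<le> real_of_rat (R (prefix \<omega> n)) - real (\<rho> n div 2)" for n
      using T_half[of "prefix \<omega> n"] of_nat_div_le_of_nat[of "\<rho> n" 2] by simp
    show "limsup (\<lambda>n. ereal (T (prefix \<omega> n) - real (\<rho> n))) \<le> 0"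
    proof (rule ccontr)
      assume "\<not> ?thesis"
      then have "0 < limsup (\<lambda>n. ereal (real_of_rat (R (prefix \<omega> n)) - real (\<rho> n div 2)))"
        by (intro limsup_pos_of_half_le[OF half_le]) simp
      with R growth_function_div2[OF \<rho>] no_rational_test show False
        by blast
    qed
  qed
qed

end
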